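(* Assume values are i.i.d. with CDF $F$ on $[0,\bar v]$ and continuous density $f > 0$, and $2 \le k < n$. Let $z$ be the interim payment function of the efficient allocation rule, $\bar R = n\,\mathbb E[z(v)]$, $G(u) = \binom{n-1}{k-1}(1-F(u))^{k-2}F(u)^{n-k} f(u)$, $$ N(v) = \int_0^v \big[z'(u) - \bar R\, G(u)\big](1-F(u))\,du, \qquad D(v) = \binom{n-1}{k-1} F(v)^{n-k}(1-F(v))^k, $$ and $\psi(v) = N(v)/D(v)$ for $v \in (0,\bar v)$. Then $\lim_{v \downarrow 0}\psi(v) = 0$.
   Context: Setting: $n$ unit-demand bidders, $k$ identical items. The efficient allocation rule gives one item to each of the $k$ bidders with the highest values (ties broken by any fixed rule). Its interim allocation is $x(v) = \mathbb E[A_i(\bm v)\mid v_i = v]$ and interim payment $z(v) = v x(v) - \int_0^v x(u)\,du$. *)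

theory Defs
  imports "HOL-Probability.Probability"
begin

definition value_dist :: "real \<Rightarrow> (real \<Rightarrow> real) \<Rightarrow> real measure" where
  "value_dist vbar f = density lborel (\<lambda>u. ennreal (indicator {0..vbar} u * f u))"

definition eff_alloc :: "nat \<Rightarrow> nat \<Rightarrow> (nat \<Rightarrow> real) \<Rightarrow> nat \<Rightarrow> bool" where
  "eff_alloc n k v i \<longleftrightarrow>
     card {j \<in> {0..<n}. v j > v i \<or> (v j = v i \<and> j < i)} < k"

text \<open>Interim allocation of bidder i: E[A_i(v) | v_i = v], the other values being i.i.d.\<close>
definition interim_alloc ::
  "nat \<Rightarrow> nat \<Rightarrow> real \<Rightarrow> (real \<Rightarrow> real) \<Rightarrow> nat \<Rightarrow> real \<Rightarrow> real" where
  "interim_alloc n k vbar f i v =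
     (LINT w | PiM ({0..<n} - {i}) (\<lambda>_. value_dist vbar f).
        (if eff_alloc n k (w(i := v)) i then 1 else 0))"

definition interim_pay ::
  "nat \<Rightarrow> nat \<Rightarrow> real \<Rightarrow> (real \<Rightarrow> real) \<Rightarrow> nat \<Rightarrow> real \<Rightarrow> real" where
  "interim_pay n k vbar f i v =
     v * interim_alloc n k vbar f i v - integral {0..v} (interim_alloc n k vbar f i)"

end

theory Submission
  imports Defs
begin

text \<open>Conditioned on \<open>v\<^sub>i = v\<close>, bidder \<open>i\<close> wins iff fewer than \<open>k\<close> of the other
  \<open>n - 1\<close> bidders outrank it, so the interim allocation is \<open>x(v) = P(F v)\<close> for a polynomial
  \<open>P(q) = \<Sum>\<^sub>S (1 - q)\<^bsup>|S|\<^esup> q\<^bsup>n-1-|S|\<^esup>\<close> over the possible sets \<open>S\<close> of outranking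
  bidders, \<open>|S| < k\<close>. Every monomial carries \<open>q\<close> at least to the power \<open>n - k\<close>, hence
  \<open>z'(v) = v P'(F v) f(v) = O(v\<^bsup>n-k\<^esup>)\<close>, and so is \<open>G\<close>; thus \<open>N(v) = O(v\<^bsup>n-k+1\<^esup>)\<close>.
  Since \<open>f\<close> is bounded below by a positive constant, \<open>F v\<close> grows linearly and
  \<open>D(v) \<ge> L v\<^bsup>n-k\<^esup>\<close> near \<open>0\<close>. So \<open>\<psi>(v) = O(v)\<close>, whatever the value of \<open>R\<close> and without
  using \<open>k \<ge> 2\<close>.\<close>

lemma prod_if_eq_power:
  fixes a b :: "'b::comm_monoid_mult"
  assumes "finite I" "S \<subseteq> I"
  shows "(\<Prod>j\<in>I. if j \<in> S then a else b) = a ^ card S * b ^ card (I - S)"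
proof -
  have "I \<inter> {j. j \<in> S} = S" "I \<inter> - {j. j \<in> S} = I - S" using assms(2) by auto
  then show ?thesis using prod.If_cases[OF assms(1), of "\<lambda>j. j \<in> S" "\<lambda>_. a" "\<lambda>_. b"] by simp
qed

lemma card_less_set_eq_Union_PiE:
  assumes "\<And>j. j \<in> I \<Longrightarrow> A j \<subseteq> X"
  shows "{w \<in> Pi\<^sub>E I (\<lambda>_. X). card {j\<in>I. w j \<in> A j} < k}
       = (\<Union>S\<in>{S. S \<subseteq> I \<and> card S < k}. Pi\<^sub>E I (\<lambda>j. if j \<in> S then A j else X - A j))"
proof (intro equalityI subsetI)
  fix w assume "w \<in> {w \<in> Pi\<^sub>E I (\<lambda>_. X). card {j\<in>I. w j \<in> A j} < k}"
  then have "{j\<in>I. w j \<in> A j} \<in> {S. S \<subseteq> I \<and> card S < k}"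
    and "w \<in> Pi\<^sub>E I (\<lambda>j. if j \<in> {j\<in>I. w j \<in> A j} then A j else X - A j)"
    by (auto simp: PiE_iff)
  then show "w \<in> (\<Union>S\<in>{S. S \<subseteq> I \<and> card S < k}. Pi\<^sub>E I (\<lambda>j. if j \<in> S then A j else X - A j))"
    by blast
next
  fix w assume "w \<in> (\<Union>S\<in>{S. S \<subseteq> I \<and> card S < k}. Pi\<^sub>E I (\<lambda>j. if j \<in> S then A j else X - A j))"
  then obtain S where S: "S \<subseteq> I" "card S < k" "w \<in> Pi\<^sub>E I (\<lambda>j. if j \<in> S then A j else X - A j)"
    by blast
  then have "{j\<in>I. w j \<in> A j} = S" by (auto simp: PiE_iff split: if_splits)
  with S assms show "w \<in> {w \<in> Pi\<^sub>E I (\<lambda>_. X). card {j\<in>I. w j \<in> A j} < k}"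
    by (force simp: PiE_iff split: if_splits)
qed

lemma measure_PiM_card_less:
  assumes "prob_space M" "finite I"
    and A: "\<And>j. j \<in> I \<Longrightarrow> A j \<in> sets M" "\<And>j. j \<in> I \<Longrightarrow> measure M (A j) = p"
  shows "measure (PiM I (\<lambda>_. M)) {w \<in> space (PiM I (\<lambda>_. M)). card {j\<in>I. w j \<in> A j} < k}
       = (\<Sum>S | S \<subseteq> I \<and> card S < k. p ^ card S * (1 - p) ^ card (I - S))"
proof -
  interpret M: prob_space M by fact
  interpret finite_product_prob_space "\<lambda>_. M" I
    by unfold_locales (rule assms(2))
  let ?SS = "{S. S \<subseteq> I \<and> card S < k}"
  let ?B = "\<lambda>S. Pi\<^sub>E I (\<lambda>j. if j \<in> S then A j else space M - A j)"
  have finSS: "finite ?SS" by (rule finite_subset[of _ "Pow I"]) (auto simp: assms(2))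
  have B: "?B S \<in> sets (PiM I (\<lambda>_. M))" for S
    using A(1) by (auto intro!: sets_PiM_I_finite assms(2))
  have "{w \<in> space (PiM I (\<lambda>_. M)). card {j\<in>I. w j \<in> A j} < k} = (\<Union>S\<in>?SS. ?B S)"
    unfolding space_PiM using A(1)[THEN sets.sets_into_space] by (rule card_less_set_eq_Union_PiE)
  moreover have "measure (PiM I (\<lambda>_. M)) (\<Union>S\<in>?SS. ?B S) = (\<Sum>S\<in>?SS. measure (PiM I (\<lambda>_. M)) (?B S))"
  proof (rule finite_measure_finite_Union[OF finSS])
    show "disjoint_family_on ?B ?SS"
      unfolding disjoint_family_on_def by (auto simp: PiE_iff) (metis Diff_iff subsetD)+
  qed (use B in auto)
  moreover have "measure (PiM I (\<lambda>_. M)) (?B S) = p ^ card S * (1 - p) ^ card (I - S)" if "S \<in> ?SS" for S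
  proof -
    have "measure (PiM I (\<lambda>_. M)) (?B S) = (\<Prod>j\<in>I. if j \<in> S then p else 1 - p)"
      using A by (subst prob_times) (auto intro!: prod.cong simp: M.prob_compl)
    then show ?thesis using that by (simp add: prod_if_eq_power assms(2))
  qed
  ultimately show ?thesis by simp
qed

definition win_prob :: "'a set \<Rightarrow> nat \<Rightarrow> real \<Rightarrow> real" where
  "win_prob I k q = (\<Sum>S | S \<subseteq> I \<and> card S < k. (1 - q) ^ card S * q ^ card (I - S))"

definition win_prob_deriv :: "'a set \<Rightarrow> nat \<Rightarrow> real \<Rightarrow> real" where
  "win_prob_deriv I k q = (\<Sum>S | S \<subseteq> I \<and> card S < k.
      - (real (card S) * (1 - q) ^ (card S - 1)) * q ^ card (I - S)
      + (1 - q) ^ card S * (real (card (I - S)) * q ^ (card (I - S) - 1)))"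

lemma has_real_derivative_win_prob: "(win_prob I k has_real_derivative win_prob_deriv I k q) (at q)"
  unfolding win_prob_def[abs_def] win_prob_deriv_def
  by (auto intro!: derivative_eq_intros sum.cong simp: mult_ac)

lemma continuous_on_win_prob: "continuous_on A (win_prob I k)"
  unfolding win_prob_def[abs_def] by (intro continuous_intros)

lemma continuous_on_win_prob_deriv: "continuous_on A (win_prob_deriv I k)"
  unfolding win_prob_deriv_def[abs_def] by (intro continuous_intros)

lemma abs_deriv_power_product_le:
  fixes q :: real
  assumes "0 \<le> q" "q \<le> 1" "Suc m \<le> b"
  shows "\<bar>- (real a * (1 - q) ^ (a - 1)) * q ^ b + (1 - q) ^ a * (real b * q ^ (b - 1))\<bar>
          \<le> real (a + b) * q ^ m"
proof -
  define X where "X = (1 - q) ^ (a - 1) * q ^ b"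
  define Y where "Y = (1 - q) ^ a * q ^ (b - 1)"
  have "X \<le> 1 * q ^ m"
    unfolding X_def using assms by (intro mult_mono power_le_one power_decreasing) auto
  then have X: "0 \<le> X" "X \<le> q ^ m" unfolding X_def using assms by auto
  have "Y \<le> 1 * q ^ m"
    unfolding Y_def using assms by (intro mult_mono power_le_one power_decreasing) auto
  then have Y: "0 \<le> Y" "Y \<le> q ^ m" unfolding Y_def using assms by auto
  have "\<bar>- (real a * (1 - q) ^ (a - 1)) * q ^ b + (1 - q) ^ a * (real b * q ^ (b - 1))\<bar>
      = \<bar>real b * Y - real a * X\<bar>"
    unfolding X_def Y_def by (simp add: algebra_simps)
  also have "\<dots> \<le> real a * X + real b * Y" using X(1) Y(1) by (simp add: abs_le_iff)
  also have "\<dots> \<le> real a * q ^ m + real b * q ^ m" using X Y by (intro add_mono mult_left_mono) auto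
  finally show ?thesis by (simp add: algebra_simps)
qed

lemma abs_win_prob_deriv_le:
  assumes "finite I" "k \<le> card I" "0 \<le> q" "q \<le> 1"
  shows "\<bar>win_prob_deriv I k q\<bar> \<le> real (card {S. S \<subseteq> I \<and> card S < k}) * real (card I) * q ^ (card I - k)"
proof -
  have "\<bar>win_prob_deriv I k q\<bar> \<le> (\<Sum>S | S \<subseteq> I \<and> card S < k. real (card I) * q ^ (card I - k))"
    unfolding win_prob_deriv_def
  proof (rule order_trans[OF sum_abs sum_mono])
    fix S assume S: "S \<in> {S. S \<subseteq> I \<and> card S < k}"
    then have "card (I - S) = card I - card S" "card S \<le> card I"
      using assms(1) by (auto simp: card_Diff_subset finite_subset card_mono)
    then show "\<bar>- (real (card S) * (1 - q) ^ (card S - 1)) * q ^ card (I - S)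
        + (1 - q) ^ card S * (real (card (I - S)) * q ^ (card (I - S) - 1))\<bar> \<le> real (card I) * q ^ (card I - k)"
      using abs_deriv_power_product_le[OF assms(3,4), of "card I - k" "card (I - S)" "card S"] S assms(2)
      by auto
  qed
  then show ?thesis by simp
qed

lemma abs_integral_le_power:
  fixes g :: "real \<Rightarrow> real"
  assumes "g integrable_on {0..v}" "0 \<le> v" "\<And>u. u \<in> {0..v} \<Longrightarrow> \<bar>g u\<bar> \<le> K * u ^ p"
  shows "\<bar>integral {0..v} g\<bar> \<le> K * v ^ Suc p"
proof (cases "v = 0")
  case False
  have "\<bar>g v\<bar> \<le> K * v ^ p" using assms(2,3) by simp
  then have "0 \<le> K * v ^ p" by (rule order_trans[OF abs_ge_zero])
  moreover have "0 < v ^ p" using False assms(2) by simp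
  ultimately have K: "0 \<le> K" by (simp add: zero_le_mult_iff)
  have "norm (integral {0..v} g) \<le> integral {0..v} (\<lambda>_. K * v ^ p)"
  proof (rule Henstock_Kurzweil_Integration.integral_norm_bound_integral[OF assms(1) integrable_const_ivl])
    fix u assume u: "u \<in> {0..v}"
    have "K * u ^ p \<le> K * v ^ p" using u K by (intro mult_left_mono power_mono) auto
    then show "norm (g u) \<le> K * v ^ p" using assms(3)[OF u] by simp
  qed
  then show ?thesis using assms(2) by (simp add: mult_ac)
qed simp

lemma tendsto_zero_if_power_bounds:
  fixes N D :: "real \<Rightarrow> real"
  assumes "0 < L" "\<forall>\<^sub>F v in at_right 0. L * v ^ p \<le> D v"
    and "\<forall>\<^sub>F v in at_right 0. \<bar>N v\<bar> \<le> K * v ^ Suc p"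
  shows "((\<lambda>v. N v / D v) \<longlongrightarrow> 0) (at_right 0)"
proof (rule Lim_null_comparison)
  show "\<forall>\<^sub>F v in at_right 0. norm (N v / D v) \<le> K / L * v"
    using assms(3,2) eventually_at_right_less[of 0]
  proof eventually_elim
    case (elim v)
    then have "0 < L * v ^ p" using assms(1) by simp
    then have "\<bar>N v\<bar> / D v \<le> K * v ^ Suc p / (L * v ^ p)"
      using elim by (intro frac_le) auto
    also have "\<dots> = K / L * v" using \<open>0 < L * v ^ p\<close> by (simp add: field_simps)
    finally show ?case using \<open>0 < L * v ^ p\<close> elim by simp
  qed
  show "((\<lambda>v. K / L * v) \<longlongrightarrow> 0) (at_right 0)"
    using assms(1) by (auto intro!: tendsto_eq_intros)
qed

locale value_density =
  fixes vbar :: real and F f :: "real \<Rightarrow> real"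
  assumes vbar_pos: "vbar > 0"
    and f_cont: "continuous_on {0..vbar} f"
    and f_pos: "\<forall>u\<in>{0..vbar}. f u > 0"
    and F_eq: "\<forall>u\<in>{0..vbar}. F u = integral {0..u} f"
    and F_vbar: "F vbar = 1"
begin

lemma f_integrable_on: "a \<le> vbar \<Longrightarrow> f integrable_on {0..a}"
  by (rule integrable_continuous_real, rule continuous_on_subset[OF f_cont]) auto

lemma nn_integral_f_Icc: assumes "0 \<le> a" "a \<le> vbar"
  shows "(\<integral>\<^sup>+x. ennreal (f x) * indicator {0..a} x \<partial>lborel) = ennreal (F a)"
proof (rule nn_integral_has_integral_lebesgue')
  show "(f has_integral F a) {0..a}"
    using f_integrable_on[OF assms(2)] F_eq assms by (simp add: has_integral_integral)
qed (use f_pos assms in \<open>auto simp: less_imp_le\<close>)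

lemma emeasure_value_dist: "emeasure (value_dist vbar f) A
    = (\<integral>\<^sup>+x. ennreal (f x) * indicator ({0..vbar} \<inter> A) x \<partial>lborel)" if "A \<in> sets borel"
proof -
  have "(\<lambda>u. ennreal (indicator {0..vbar} u * f u)) \<in> borel_measurable lborel"
    using borel_measurable_continuous_on_indicator[OF _ f_cont] by simp
  with that show ?thesis unfolding value_dist_def
    by (simp add: emeasure_density) (auto intro!: nn_integral_cong simp: indicator_def)
qed

lemma prob_space_value_dist: "prob_space (value_dist vbar f)"
proof (rule prob_spaceI)
  have "space (value_dist vbar f) = UNIV" unfolding value_dist_def by simp
  then show "emeasure (value_dist vbar f) (space (value_dist vbar f)) = 1"
    using emeasure_value_dist[of UNIV] nn_integral_f_Icc[of vbar] vbar_pos F_vbar by simp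
qed

lemma F_nonneg: "u \<in> {0..vbar} \<Longrightarrow> 0 \<le> F u"
  using F_eq f_pos f_integrable_on by (auto intro!: integral_nonneg simp: less_imp_le)

lemma measure_value_dist_atMost: assumes "u \<in> {0..vbar}"
  shows "measure (value_dist vbar f) {..u} = F u"
proof -
  have "{0..vbar} \<inter> {..u} = {0..u}" using assms by auto
  then show ?thesis
    using nn_integral_f_Icc[of u] assms F_nonneg[OF assms] by (simp add: measure_def emeasure_value_dist)
qed

lemma F_le_1: "u \<in> {0..vbar} \<Longrightarrow> F u \<le> 1"
  using prob_space.prob_le_1[OF prob_space_value_dist] measure_value_dist_atMost by metis

lemma measure_value_dist_outrank: assumes "u \<in> {0..vbar}"
  shows "measure (value_dist vbar f) {w. u < w \<or> (w = u \<and> b)} = 1 - F u"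
proof -
  interpret prob_space "value_dist vbar f" by (rule prob_space_value_dist)
  have sets: "sets (value_dist vbar f) = sets borel" "space (value_dist vbar f) = UNIV"
    unfolding value_dist_def by simp_all
  have "{0..vbar} \<inter> {u} \<in> null_sets lborel" by (rule null_sets_subset[of "{u}"]) auto
  then have "measure (value_dist vbar f) {u} = 0"
    using emeasure_value_dist[of "{u}"] nn_integral_null_set[of _ lborel "\<lambda>x. ennreal (f x)"]
    by (simp add: measure_def)
  moreover have "{..<u} = {..u} - {u}" by auto
  ultimately have "measure (value_dist vbar f) {..<u} = measure (value_dist vbar f) {..u}"
    using finite_measure_Diff[of "{..u}" "{u}"] sets by simp
  moreover have "{w. u < w \<or> (w = u \<and> b)} = UNIV - (if b then {..<u} else {..u})" by auto
  ultimately show ?thesis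
    using prob_compl[of "if b then {..<u} else {..u}"] sets measure_value_dist_atMost[OF assms]
    by (auto split: if_splits)
qed

lemma interim_alloc_eq_win_prob:
  assumes "i < n" "v \<in> {0..vbar}"
  shows "interim_alloc n k vbar f i v = win_prob ({0..<n} - {i}) k (F v)"
proof -
  define I where "I = {0..<n} - {i}"
  define A where "A j = {u. v < u \<or> (u = v \<and> j < i)}" for j
  let ?P = "PiM I (\<lambda>_. value_dist vbar f)"
  define E where "E = {w. card {j\<in>I. w j \<in> A j} < k}"
  have eff: "eff_alloc n k (w(i := v)) i \<longleftrightarrow> w \<in> E" for w
  proof -
    have "{j \<in> {0..<n}. (w(i := v)) j > (w(i := v)) i \<or> ((w(i := v)) j = (w(i := v)) i \<and> j < i)}
          = {j\<in>I. w j \<in> A j}"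
      unfolding I_def A_def by auto
    then show ?thesis unfolding eff_alloc_def E_def by simp
  qed
  have "interim_alloc n k vbar f i v = (LINT w|?P. indicator E w)"
    unfolding interim_alloc_def I_def[symmetric]
    by (intro Bochner_Integration.integral_cong) (auto simp: eff indicator_def)
  also have "\<dots> = measure ?P {w \<in> space ?P. card {j\<in>I. w j \<in> A j} < k}"
    by (simp add: E_def Collect_conj_eq Int_commute)
  also have "\<dots> = (\<Sum>S | S \<subseteq> I \<and> card S < k. (1 - F v) ^ card S * (1 - (1 - F v)) ^ card (I - S))"
  proof (rule measure_PiM_card_less[OF prob_space_value_dist])
    show "A j \<in> sets (value_dist vbar f)" for j
      unfolding A_def value_dist_def by (cases "j < i") (auto simp: greaterThan_def[symmetric] atLeast_def[symmetric])
    show "measure (value_dist vbar f) (A j) = 1 - F v" for j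
      unfolding A_def by (rule measure_value_dist_outrank[OF assms(2)])
  qed (simp add: I_def)
  finally show ?thesis by (simp add: win_prob_def I_def)
qed

lemma continuous_on_F: "continuous_on {0..vbar} F"
  by (rule continuous_on_eq[OF indefinite_integral_continuous_1[OF f_integrable_on[OF order_refl]]])
    (use F_eq in auto)

lemma F_has_real_derivative: assumes "w \<in> {0<..<vbar}"
  shows "(F has_real_derivative f w) (at w)"
proof -
  have "((\<lambda>x. integral {0..x} f) has_real_derivative f w) (at w)"
    using integral_has_real_derivative[OF f_cont, of w] assms by (simp add: at_within_Icc_at)
  then show ?thesis
    by (rule has_field_derivative_transform_within_open[of _ _ _ "{0<..<vbar}"]) (use assms F_eq in auto)
qed

lemma f_bounds: obtains a b where "0 < a" "\<And>u. u \<in> {0..vbar} \<Longrightarrow> a \<le> f u \<and> f u \<le> b"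
proof -
  obtain a0 where "a0 \<in> {0..vbar}" "\<forall>y\<in>{0..vbar}. f a0 \<le> f y"
    using continuous_attains_inf[OF compact_Icc _ f_cont] vbar_pos by auto
  moreover obtain a1 where "\<forall>y\<in>{0..vbar}. f y \<le> f a1"
    using continuous_attains_sup[OF compact_Icc _ f_cont] vbar_pos by auto
  ultimately show thesis using that[of "f a0" "f a1"] f_pos by blast
qed

lemma F_linear_bounds:
  assumes "\<And>u. u \<in> {0..vbar} \<Longrightarrow> a \<le> f u \<and> f u \<le> b" "u \<in> {0..vbar}"
  shows "a * u \<le> F u \<and> F u \<le> b * u"
proof -
  have "integral {0..u} (\<lambda>_. a) \<le> integral {0..u} f"
    by (rule integral_le[OF integrable_const_ivl f_integrable_on]) (use assms in auto)
  moreover have "integral {0..u} f \<le> integral {0..u} (\<lambda>_. b)"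
    by (rule integral_le[OF f_integrable_on integrable_const_ivl]) (use assms in auto)
  ultimately show ?thesis using assms(2) F_eq by (simp add: mult.commute)
qed

lemma deriv_interim_pay:
  assumes "i < n" "w \<in> {0<..<vbar}"
  shows "deriv (interim_pay n k vbar f i) w = w * win_prob_deriv ({0..<n} - {i}) k (F w) * f w"
proof -
  define P where "P = win_prob ({0..<n} - {i}) k"
  define Z where "Z y = y * P (F y) - integral {0..y} (\<lambda>u. P (F u))" for y
  have PF_cont: "continuous_on {0..vbar} (\<lambda>u. P (F u))"
    unfolding P_def by (rule continuous_on_compose2[OF continuous_on_win_prob continuous_on_F]) auto
  have Z_eq: "Z y = interim_pay n k vbar f i y" if "y \<in> {0<..<vbar}" for y
  proof -
    have "integral {0..y} (interim_alloc n k vbar f i) = integral {0..y} (\<lambda>u. P (F u))"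
      using that assms(1) by (intro integral_cong) (auto simp: interim_alloc_eq_win_prob P_def)
    then show ?thesis
      using that assms(1) by (simp add: interim_pay_def Z_def interim_alloc_eq_win_prob P_def)
  qed
  have "(Z has_real_derivative w * win_prob_deriv ({0..<n} - {i}) k (F w) * f w) (at w)"
  proof -
    have d1: "((\<lambda>y. P (F y)) has_real_derivative win_prob_deriv ({0..<n} - {i}) k (F w) * f w) (at w)"
      unfolding P_def by (rule DERIV_chain2[OF has_real_derivative_win_prob F_has_real_derivative[OF assms(2)]])
    have d2: "((\<lambda>y. integral {0..y} (\<lambda>u. P (F u))) has_real_derivative P (F w)) (at w)"
      using integral_has_real_derivative[OF PF_cont, of w] assms(2) by (simp add: at_within_Icc_at)
    show ?thesis
      unfolding Z_def[abs_def] using DERIV_diff[OF DERIV_mult[OF DERIV_ident d1] d2] by (simp add: algebra_simps)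
  qed
  then have "(interim_pay n k vbar f i has_real_derivative w * win_prob_deriv ({0..<n} - {i}) k (F w) * f w) (at w)"
    by (rule has_field_derivative_transform_within_open[OF _ open_greaterThanLessThan assms(2) Z_eq])
  then show ?thesis by (rule DERIV_imp_deriv)
qed

lemma abs_payment_integrand_le:
  assumes "k < n" "i < n"
  obtains K where "\<And>u. u \<in> {0..vbar} \<Longrightarrow>
    \<bar>(u * win_prob_deriv ({0..<n} - {i}) k (F u) * f u - R * (c * (1 - F u) ^ (k - 2) * F u ^ (n - k) * f u))
      * (1 - F u)\<bar> \<le> K * u ^ (n - k)"
proof -
  define I where "I = {0..<n} - {i}"
  define A where "A = real (card {S. S \<subseteq> I \<and> card S < k}) * real (card I)"
  obtain a b where ab: "0 < a" "\<And>u. u \<in> {0..vbar} \<Longrightarrow> a \<le> f u \<and> f u \<le> b" using f_bounds by blast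
  obtain m where m: "n - k = Suc m" using assms(1) by (metis Suc_diff_Suc)
  have card_I: "card I = n - 1" "card I - k = m" unfolding I_def using assms m by auto
  have "\<bar>(u * win_prob_deriv I k (F u) * f u - R * (c * (1 - F u) ^ (k - 2) * F u ^ (n - k) * f u))
      * (1 - F u)\<bar> \<le> (A * b ^ (n - k) + \<bar>R * c\<bar> * b ^ (n - k) * b) * u ^ (n - k)"
    if u: "u \<in> {0..vbar}" for u
  proof -
    define T1 where "T1 = u * win_prob_deriv I k (F u) * f u"
    define T2 where "T2 = R * (c * (1 - F u) ^ (k - 2) * F u ^ (n - k) * f u)"
    have F: "0 \<le> F u" "F u \<le> 1" "F u \<le> b * u" and f: "0 \<le> f u" "f u \<le> b"
      using F_nonneg[OF u] F_le_1[OF u] F_linear_bounds[OF ab(2) u] ab(2)[OF u] ab(1) by auto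
    have "\<bar>win_prob_deriv I k (F u)\<bar> \<le> A * F u ^ m"
      using abs_win_prob_deriv_le[of I k "F u"] F assms card_I unfolding A_def by (simp add: I_def)
    also have "\<dots> \<le> A * (b * u) ^ m" unfolding A_def using F by (intro mult_left_mono power_mono) auto
    finally have "\<bar>T1\<bar> \<le> u * (A * (b * u) ^ m) * b"
      unfolding T1_def using u f by (simp add: abs_mult) (intro mult_mono mult_left_mono; simp)
    also have "\<dots> = A * b ^ (n - k) * u ^ (n - k)" by (simp add: m power_mult_distrib algebra_simps)
    finally have T1: "\<bar>T1\<bar> \<le> A * b ^ (n - k) * u ^ (n - k)" .
    define X where "X = (1 - F u) ^ (k - 2) * F u ^ (n - k) * f u"
    have X: "0 \<le> X" "X \<le> 1 * (b * u) ^ (n - k) * b"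
      unfolding X_def using F f by (simp, intro mult_mono power_le_one power_mono) auto
    have "T2 = (R * c) * X" unfolding T2_def X_def by (simp add: mult_ac)
    then have "\<bar>T2\<bar> = \<bar>R * c\<bar> * X"
      by (simp only: abs_mult abs_of_nonneg[OF X(1)])
    also have "\<dots> \<le> \<bar>R * c\<bar> * b ^ (n - k) * b * u ^ (n - k)"
      using mult_left_mono[OF X(2), of "\<bar>R * c\<bar>"] by (simp add: power_mult_distrib mult_ac)
    finally have T2: "\<bar>T2\<bar> \<le> \<bar>R * c\<bar> * b ^ (n - k) * b * u ^ (n - k)" .
    have "\<bar>(T1 - T2) * (1 - F u)\<bar> \<le> (\<bar>T1\<bar> + \<bar>T2\<bar>) * 1"
      unfolding abs_mult using F by (intro mult_mono abs_triangle_ineq4) auto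
    also have "\<dots> \<le> A * b ^ (n - k) * u ^ (n - k) + \<bar>R * c\<bar> * b ^ (n - k) * b * u ^ (n - k)"
      using T1 T2 by simp
    also have "\<dots> = (A * b ^ (n - k) + \<bar>R * c\<bar> * b ^ (n - k) * b) * u ^ (n - k)"
      by (simp add: algebra_simps)
    finally show ?thesis unfolding T1_def T2_def .
  qed
  then show thesis using that unfolding I_def by blast
qed

lemma eventually_abs_payment_integral_le:
  assumes "k < n" "i < n"
  obtains K where "\<forall>\<^sub>F v in at_right 0. \<bar>integral {0..v} (\<lambda>u. (deriv (interim_pay n k vbar f i) u
      - R * (c * (1 - F u) ^ (k - 2) * F u ^ (n - k) * f u)) * (1 - F u))\<bar> \<le> K * v ^ Suc (n - k)"
proof -
  define g where "g u = (u * win_prob_deriv ({0..<n} - {i}) k (F u) * f u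
      - R * (c * (1 - F u) ^ (k - 2) * F u ^ (n - k) * f u)) * (1 - F u)" for u
  obtain K where K: "\<And>u. u \<in> {0..vbar} \<Longrightarrow> \<bar>g u\<bar> \<le> K * u ^ (n - k)"
    using abs_payment_integrand_le[OF assms, of R c] unfolding g_def by blast
  have g_cont: "continuous_on {0..vbar} g"
    unfolding g_def using f_cont
    by (intro continuous_intros continuous_on_compose2[OF continuous_on_win_prob_deriv continuous_on_F]
        continuous_on_F) auto
  have bound: "\<bar>integral {0..v} (\<lambda>u. (deriv (interim_pay n k vbar f i) u
      - R * (c * (1 - F u) ^ (k - 2) * F u ^ (n - k) * f u)) * (1 - F u))\<bar> \<le> K * v ^ Suc (n - k)"
    if v: "0 < v" "v < vbar" for v
  proof -
    have "integral {0..v} (\<lambda>u. (deriv (interim_pay n k vbar f i) u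
      - R * (c * (1 - F u) ^ (k - 2) * F u ^ (n - k) * f u)) * (1 - F u)) = integral {0..v} g"
      by (rule integral_spike[of "{0}"]) (use v assms(2) in \<open>auto simp: g_def deriv_interim_pay\<close>)
    moreover have "\<bar>integral {0..v} g\<bar> \<le> K * v ^ Suc (n - k)"
      using v K by (intro abs_integral_le_power integrable_continuous_real continuous_on_subset[OF g_cont]) auto
    ultimately show ?thesis by simp
  qed
  show thesis
    by (rule that[of K], unfold eventually_at_right_field, rule exI[of _ vbar]) (use vbar_pos bound in auto)
qed

lemma eventually_power_le_cdf_product:
  assumes "0 < c"
  obtains L where "0 < L" "\<forall>\<^sub>F v in at_right 0. L * v ^ p \<le> c * F v ^ p * (1 - F v) ^ q"
proof -
  obtain a b where ab: "0 < a" "\<And>u. u \<in> {0..vbar} \<Longrightarrow> a \<le> f u \<and> f u \<le> b" using f_bounds by blast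
  then have b: "0 < b" using vbar_pos by force
  have bound: "c * a ^ p * (1 / 2) ^ q * v ^ p \<le> c * F v ^ p * (1 - F v) ^ q"
    if v: "0 < v" "v < min vbar (1 / (2 * b))" for v
  proof -
    have "a * v \<le> F v" "F v \<le> 1 / 2"
      using F_linear_bounds[OF ab(2), of v] v b by (auto simp: field_simps)
    then have "(a * v) ^ p * (1 / 2) ^ q \<le> F v ^ p * (1 - F v) ^ q"
      using ab(1) v F_nonneg[of v] by (intro mult_mono power_mono) auto
    then show ?thesis using assms by (simp add: power_mult_distrib mult_ac mult_left_mono)
  qed
  show thesis
  proof (rule that[of "c * a ^ p * (1 / 2) ^ q"], unfold eventually_at_right_field)
    show "\<exists>d>0. \<forall>v>0. v < d \<longrightarrow> c * a ^ p * (1 / 2) ^ q * v ^ p \<le> c * F v ^ p * (1 - F v) ^ q"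
      by (rule exI[of _ "min vbar (1 / (2 * b))"]) (use vbar_pos b bound in auto)
  qed (use assms ab(1) in simp)
qed

end

theorem mainTheorem14:
  fixes n k i :: nat and vbar :: real and F f :: "real \<Rightarrow> real"
  assumes "2 \<le> k" and "k < n" and "i < n"
    and "vbar > 0"
    and "continuous_on {0..vbar} f"
    and "\<forall>u\<in>{0..vbar}. f u > 0"
    and "\<forall>u\<in>{0..vbar}. F u = integral {0..u} f"
    and "F vbar = 1"
  shows
   "let z = interim_pay n k vbar f i;
        Rbar = real n * (LINT v | value_dist vbar f. z v);
        G = (\<lambda>u. real ((n - 1) choose (k - 1)) * (1 - F u) ^ (k - 2) * F u ^ (n - k) * f u);
        N = (\<lambda>v. integral {0..v} (\<lambda>u. (deriv z u - Rbar * G u) * (1 - F u)));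
        D = (\<lambda>v. real ((n - 1) choose (k - 1)) * F v ^ (n - k) * (1 - F v) ^ k);
        \<psi> = (\<lambda>v. N v / D v)
    in (\<psi> \<longlongrightarrow> 0) (at_right 0)"
proof -
  interpret value_density vbar F f
    using assms(4-8) by unfold_locales
  define c where "c = real ((n - 1) choose (k - 1))"
  have "0 < c" unfolding c_def using assms(2) by simp
  obtain L where "0 < L" "\<forall>\<^sub>F v in at_right 0. L * v ^ (n - k) \<le> c * F v ^ (n - k) * (1 - F v) ^ k"
    using eventually_power_le_cdf_product[OF \<open>0 < c\<close>] by blast
  moreover obtain K where "\<forall>\<^sub>F v in at_right 0. \<bar>integral {0..v} (\<lambda>u. (deriv (interim_pay n k vbar f i) u
      - real n * (LINT v | value_dist vbar f. interim_pay n k vbar f i v)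
        * (c * (1 - F u) ^ (k - 2) * F u ^ (n - k) * f u)) * (1 - F u))\<bar> \<le> K * v ^ Suc (n - k)"
    using eventually_abs_payment_integral_le[OF assms(2,3)] by blast
  ultimately show ?thesis
    unfolding Let_def c_def by (rule tendsto_zero_if_power_bounds)
qed

end
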